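(* Let $u\in\varphi^{-1}(0)$ and let $\alpha^1,\alpha^2\in\Delta_k$ be two solutions of $(\mathrm{P}_u)$ with $\alpha^1\neq\alpha^2$. Then $\omega_u(\alpha)=0$ for all $\alpha\in\mathrm{span}\{\alpha^1,\alpha^2\}$, and $\mathrm{span}\{\alpha^1,\alpha^2\}\cap\ker(DJ^r(u)^\top)$ contains a nonzero vector.
   Context: $J^r:\mathbb{R}^n\to\mathbb{R}^k$ is continuously differentiable with Jacobian $DJ^r(u)\in\mathbb{R}^{k\times n}$ (so $\ker(DJ^r(u)^\top)\subseteq\mathbb{R}^k$), and $\epsilon\in[0,\infty)^k$. $\Delta_k:=\{\alpha\in[0,\infty)^k:\sum_{i=1}^k\alpha_i=1\}$. For $u\in\mathbb{R}^n$ and $\alpha\in\mathbb{R}^k$, $\omega_u(\alpha):=\alpha^\top\big(DJ^r(u)DJ^r(u)^\top-\epsilon\epsilon^\top\big)\alpha=\|DJ^r(u)^\top\alpha\|_2^2-(\alpha^\top\epsilon)^2$; $(\mathrm{P}_u)$ denotes the problem $\min_{\alpha\in\Delta_k}\omega_u(\alpha)$, a solution being a minimizer; $\varphi(u):=\min_{\alpha\in\Delta_k}\omega_u(\alpha)$. *)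

theory Defs
  imports "HOL-Analysis.Analysis"
begin

definition C1_map :: "(real^'n \<Rightarrow> real^'k) \<Rightarrow> bool" where
  "C1_map J \<longleftrightarrow> (\<forall>x. J differentiable (at x)) \<and> continuous_on UNIV (\<lambda>x. jacobian J (at x))"

definition DJ :: "(real^'n \<Rightarrow> real^'k) \<Rightarrow> real^'n \<Rightarrow> real^'n^'k" where
  "DJ J u = jacobian J (at u)"

definition simplex_k :: "(real^'k) set" where
  "simplex_k = {\<alpha>. (\<forall>i. 0 \<le> \<alpha> $ i) \<and> (\<Sum>i\<in>UNIV. \<alpha> $ i) = 1}"

definition omega :: "(real^'n \<Rightarrow> real^'k) \<Rightarrow> real^'k \<Rightarrow> real^'n \<Rightarrow> real^'k \<Rightarrow> real" where
  "omega J \<epsilon> u \<alpha> = \<alpha> \<bullet> ((DJ J u ** transpose (DJ J u) - (\<chi> i j. \<epsilon> $ i * \<epsilon> $ j)) *v \<alpha>)"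

definition solves_P :: "(real^'n \<Rightarrow> real^'k) \<Rightarrow> real^'k \<Rightarrow> real^'n \<Rightarrow> real^'k \<Rightarrow> bool" where
  "solves_P J \<epsilon> u \<alpha> \<longleftrightarrow> \<alpha> \<in> simplex_k \<and> (\<forall>\<beta>\<in>simplex_k. omega J \<epsilon> u \<alpha> \<le> omega J \<epsilon> u \<beta>)"

text \<open>phi(u) = min over the simplex of omega_u (the minimum is attained, so it equals the infimum).\<close>
definition phi :: "(real^'n \<Rightarrow> real^'k) \<Rightarrow> real^'k \<Rightarrow> real^'n \<Rightarrow> real" where
  "phi J \<epsilon> u = (INF \<alpha>\<in>simplex_k. omega J \<epsilon> u \<alpha>)"

end

theory Submission
  imports Defs
begin

text \<open>
  Write \<open>A = DJ(u)\<^sup>T\<close>, so that \<open>\<omega>\<^sub>u(\<alpha>) = \<parallel>A\<alpha>\<parallel>\<^sup>2 - (\<epsilon>\<cdot>\<alpha>)\<^sup>2\<close>. Two minimisers with value 0 satisfy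
  \<open>\<parallel>A\<alpha>\<^sub>i\<parallel> = \<epsilon>\<cdot>\<alpha>\<^sub>i\<close>, so by Cauchy-Schwarz their polar form
  \<open>B = A\<alpha>\<^sub>1\<cdot>A\<alpha>\<^sub>2 - (\<epsilon>\<cdot>\<alpha>\<^sub>1)(\<epsilon>\<cdot>\<alpha>\<^sub>2)\<close> is \<open>\<le> 0\<close>; on the other hand the midpoint lies in the
  simplex and \<open>\<omega>\<^sub>u\<close> there equals \<open>B/2 \<ge> 0\<close>. Hence \<open>B = 0\<close> and \<open>\<omega>\<^sub>u\<close> vanishes on the span.
  The span is two-dimensional, so it contains some \<open>v \<noteq> 0\<close> with \<open>\<epsilon>\<cdot>v = 0\<close>, and then
  \<open>\<parallel>Av\<parallel>\<^sup>2 = \<omega>\<^sub>u(v) = 0\<close>.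
\<close>

lemma span_pair: "span {a, b} = {x *\<^sub>R a + y *\<^sub>R b | x y. True}"
proof
  show "span {a, b} \<subseteq> {x *\<^sub>R a + y *\<^sub>R b | x y. True}"
  proof
    fix v assume "v \<in> span {a, b}"
    then obtain x where "v - x *\<^sub>R a \<in> span {b}" by (auto simp: span_insert)
    then obtain y where "v - x *\<^sub>R a = y *\<^sub>R b" by (auto simp: span_singleton)
    then have "v = x *\<^sub>R a + y *\<^sub>R b" by (simp add: algebra_simps)
    then show "v \<in> {x *\<^sub>R a + y *\<^sub>R b | x y. True}" by blast
  qed
  show "{x *\<^sub>R a + y *\<^sub>R b | x y. True} \<subseteq> span {a, b}"
    by (auto intro!: span_add span_scale intro: span_base)
qed

lemma norm_sq_diff_sq_linear_combination:
  fixes f :: "'a::real_vector \<Rightarrow> 'b::real_inner" and g :: "'a \<Rightarrow> real"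
  assumes "linear f" "linear g"
  defines "Q \<equiv> \<lambda>v. (norm (f v))\<^sup>2 - (g v)\<^sup>2"
  shows "Q (x *\<^sub>R a + y *\<^sub>R b)
    = x\<^sup>2 * Q a + y\<^sup>2 * Q b + 2 * x * y * (f a \<bullet> f b - g a * g b)"
proof -
  interpret f: linear f by fact
  interpret g: linear g by fact
  show ?thesis
    unfolding Q_def power2_norm_eq_inner
    by (simp add: f.add f.scale g.add g.scale inner_add_left
        inner_add_right inner_commute power2_eq_square algebra_simps)
qed

text \<open>The nonnegativity of \<open>g\<close> at the two zeros is what lets Cauchy-Schwarz give \<open>B \<le> 0\<close>.\<close>
lemma norm_sq_diff_sq_vanishes_on_span:
  fixes f :: "'a::real_vector \<Rightarrow> 'b::real_inner" and g :: "'a \<Rightarrow> real"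
  assumes f: "linear f" and g: "linear g"
  defines "Q \<equiv> \<lambda>v. (norm (f v))\<^sup>2 - (g v)\<^sup>2"
  assumes Qa: "Q a = 0" and Qb: "Q b = 0" and ga: "0 \<le> g a" and gb: "0 \<le> g b"
    and Q_mid: "0 \<le> Q ((1/2) *\<^sub>R a + (1/2) *\<^sub>R b)"
  shows "\<forall>v\<in>span {a, b}. Q v = 0"
proof -
  define B where "B = f a \<bullet> f b - g a * g b"
  have expand: "Q (x *\<^sub>R a + y *\<^sub>R b) = 2 * x * y * B" for x y
    using norm_sq_diff_sq_linear_combination[OF f g, of x a y b] Qa Qb
    by (simp add: Q_def B_def)
  have "norm (f a) = g a" "norm (f b) = g b"
    using Qa Qb ga gb by (simp_all add: Q_def power2_eq_iff_nonneg)
  then have "B \<le> 0"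
    using norm_cauchy_schwarz[of "f a" "f b"] by (simp add: B_def)
  moreover have "0 \<le> B"
    using Q_mid expand[of "1/2" "1/2"] by simp
  ultimately have "B = 0" by simp
  then show ?thesis
    using expand by (auto simp: span_pair)
qed

lemma span_pair_has_nonzero_in_kernel:
  fixes g :: "'a::real_vector \<Rightarrow> real"
  assumes g: "linear g"
    and indep: "\<And>x y. x *\<^sub>R a + y *\<^sub>R b = 0 \<Longrightarrow> x = 0 \<and> y = 0"
  shows "\<exists>v\<in>span {a, b}. v \<noteq> 0 \<and> g v = 0"
proof (cases "g a = 0")
  case True
  have "a \<noteq> 0" using indep[of 1 0] by auto
  with True show ?thesis by (auto intro: span_base)
next
  case False
  interpret g: linear g by fact
  define v where "v = g b *\<^sub>R a - g a *\<^sub>R b"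
  have "v = g b *\<^sub>R a + (- g a) *\<^sub>R b" by (simp add: v_def)
  then have "v \<in> span {a, b}" unfolding span_pair by blast
  moreover have "v \<noteq> 0" using indep[of "g b" "- g a"] False by (auto simp: v_def)
  moreover have "g v = 0" by (simp add: v_def g.diff g.scale)
  ultimately show ?thesis by blast
qed

lemma omega_eq_norm_sq_diff_sq:
  "omega J \<epsilon> u \<alpha> = (norm (transpose (DJ J u) *v \<alpha>))\<^sup>2 - (\<epsilon> \<bullet> \<alpha>)\<^sup>2"
proof -
  let ?D = "DJ J u"
  have "\<alpha> \<bullet> ((?D ** transpose ?D) *v \<alpha>) = (\<alpha> v* ?D) \<bullet> (transpose ?D *v \<alpha>)"
    by (metis matrix_vector_mul_assoc dot_lmul_matrix)
  also have "\<alpha> v* ?D = transpose ?D *v \<alpha>"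
    by (metis vector_transpose_matrix transpose_transpose)
  finally have gram: "\<alpha> \<bullet> ((?D ** transpose ?D) *v \<alpha>) = (norm (transpose ?D *v \<alpha>))\<^sup>2"
    by (simp add: power2_norm_eq_inner)
  have "(\<chi> i j. \<epsilon> $ i * \<epsilon> $ j) *v \<alpha> = (\<epsilon> \<bullet> \<alpha>) *\<^sub>R \<epsilon>"
    by (simp add: vec_eq_iff matrix_vector_mult_def inner_vec_def sum_distrib_left mult_ac)
  then have "\<alpha> \<bullet> ((\<chi> i j. \<epsilon> $ i * \<epsilon> $ j) *v \<alpha>) = (\<epsilon> \<bullet> \<alpha>)\<^sup>2"
    by (simp add: inner_commute power2_eq_square)
  with gram show ?thesis
    by (simp add: omega_def matrix_vector_mult_diff_rdistrib inner_diff_right)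
qed

lemma solves_P_imp_omega_eq_phi:
  assumes "solves_P J \<epsilon> u \<alpha>"
  shows "omega J \<epsilon> u \<alpha> = phi J \<epsilon> u"
  using assms unfolding solves_P_def phi_def by (intro cInf_eq_minimum[symmetric]) auto

lemma inner_nonneg_on_simplex:
  assumes "\<forall>i. 0 \<le> \<epsilon> $ i" and "\<alpha> \<in> simplex_k"
  shows "0 \<le> \<epsilon> \<bullet> \<alpha>"
  using assms unfolding simplex_k_def inner_vec_def by (auto intro: sum_nonneg)

lemma convex_simplex_k: "convex simplex_k"
  unfolding convex_def simplex_k_def
  by (auto simp: sum.distrib sum_distrib_left[symmetric])

lemma simplex_k_pair_independent:
  assumes "\<alpha>1 \<in> simplex_k" "\<alpha>2 \<in> simplex_k" "\<alpha>1 \<noteq> \<alpha>2"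
    and comb: "x *\<^sub>R \<alpha>1 + y *\<^sub>R \<alpha>2 = 0"
  shows "x = 0 \<and> y = 0"
proof -
  have "(\<Sum>i\<in>UNIV. (x *\<^sub>R \<alpha>1 + y *\<^sub>R \<alpha>2) $ i) = x + y"
    using assms(1,2) by (simp add: simplex_k_def sum.distrib sum_distrib_left[symmetric])
  then have "y = - x" using comb by simp
  with comb have "x *\<^sub>R (\<alpha>1 - \<alpha>2) = 0" by (simp add: algebra_simps)
  with \<open>\<alpha>1 \<noteq> \<alpha>2\<close> \<open>y = - x\<close> show ?thesis by simp
qed

theorem mainTheorem6:
  fixes J :: "real^'n \<Rightarrow> real^'k" and \<epsilon> :: "real^'k" and u :: "real^'n"
    and \<alpha>1 \<alpha>2 :: "real^'k"
  assumes "C1_map J"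
    and eps: "\<forall>i. 0 \<le> \<epsilon> $ i"
    and ph: "phi J \<epsilon> u = 0"
    and s1: "solves_P J \<epsilon> u \<alpha>1" and s2: "solves_P J \<epsilon> u \<alpha>2" and ne: "\<alpha>1 \<noteq> \<alpha>2"
  shows "(\<forall>\<alpha>\<in>span {\<alpha>1, \<alpha>2}. omega J \<epsilon> u \<alpha> = 0)
    \<and> (\<exists>v\<in>span {\<alpha>1, \<alpha>2}. v \<noteq> 0 \<and> transpose (DJ J u) *v v = 0)"
proof -
  let ?A = "transpose (DJ J u)"
  have lin: "linear ((*v) ?A)" "linear ((\<bullet>) \<epsilon>)"
    by (simp_all add: matrix_vector_mul_linear bounded_linear.linear[OF bounded_linear_inner_right])
  have in_simplex: "\<alpha>1 \<in> simplex_k" "\<alpha>2 \<in> simplex_k"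
    using s1 s2 by (simp_all add: solves_P_def)
  have mid: "(1/2::real) *\<^sub>R \<alpha>1 + (1/2::real) *\<^sub>R \<alpha>2 \<in> simplex_k"
    by (rule convexD[OF convex_simplex_k in_simplex]) auto
  have vanish: "\<forall>\<alpha>\<in>span {\<alpha>1, \<alpha>2}. omega J \<epsilon> u \<alpha> = 0"
    using norm_sq_diff_sq_vanishes_on_span[OF lin, of \<alpha>1 \<alpha>2]
      solves_P_imp_omega_eq_phi[OF s1] solves_P_imp_omega_eq_phi[OF s2] ph
      inner_nonneg_on_simplex[OF eps] in_simplex s1 mid
    by (simp add: omega_eq_norm_sq_diff_sq solves_P_def)
  obtain v where v: "v \<in> span {\<alpha>1, \<alpha>2}" "v \<noteq> 0" "\<epsilon> \<bullet> v = 0"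
    using span_pair_has_nonzero_in_kernel[OF lin(2)] simplex_k_pair_independent[OF in_simplex ne]
    by blast
  have "(norm (?A *v v))\<^sup>2 = omega J \<epsilon> u v + (\<epsilon> \<bullet> v)\<^sup>2"
    by (simp only: omega_eq_norm_sq_diff_sq diff_add_cancel)
  with v vanish have "?A *v v = 0" by simp
  with v vanish show ?thesis by blast
qed

end
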